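(* Let $X$ be a countable set and $\mathcal{A}\subseteq\mathcal{P}_\infty(X)$ hereditary. The following are equivalent: (i) $\mathcal{A}$ is an M-family; (ii) for every decreasing sequence $(D_n)_n$ in $\mathrm{co}(\mathcal{A})$ there is $A\in\mathcal{A}$ with $A\setminus D_n$ finite for every $n$; (iii) for every sequence $(A_n)_n$ in $\mathcal{A}$ there is $A\in\mathcal{A}$ with $A\cap A_n\neq\varnothing$ for infinitely many $n$.
   Context: $\mathcal{P}_\infty(X)$: infinite subsets of $X$. Hereditary: $A\in\mathcal{A}$, $A'\subseteq A$ infinite imply $A'\in\mathcal{A}$. An M-family is a hereditary family $\mathcal{A}$ such that for every sequence $(A_n)_n$ in $\mathcal{A}$ there is $A\in\mathcal{A}$ with $A\setminus\bigcup_{i\ge n}A_i$ finite for every $n$. $\mathrm{co}(\mathcal{A})=\{B\in\mathcal{P}_\infty(X):\exists A\in\mathcal{A},\ B\cap A\text{ infinite}\}$. *)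

theory Defs
  imports Main "HOL-Library.Countable_Set"
begin

definition Pinf :: "'a set \<Rightarrow> 'a set set" where
  "Pinf X = {B. B \<subseteq> X \<and> infinite B}"

definition hereditary :: "'a set set \<Rightarrow> bool" where
  "hereditary \<A> \<longleftrightarrow> (\<forall>A\<in>\<A>. \<forall>A'. A' \<subseteq> A \<and> infinite A' \<longrightarrow> A' \<in> \<A>)"

definition M_family :: "'a set set \<Rightarrow> bool" where
  "M_family \<A> \<longleftrightarrow> hereditary \<A> \<and>
     (\<forall>As :: nat \<Rightarrow> 'a set. (\<forall>n. As n \<in> \<A>) \<longrightarrow>
        (\<exists>A\<in>\<A>. \<forall>n. finite (A - (\<Union>i\<in>{n..}. As i))))"

definition co :: "'a set \<Rightarrow> 'a set set \<Rightarrow> 'a set set" where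
  "co X \<A> = {B \<in> Pinf X. \<exists>A\<in>\<A>. infinite (B \<inter> A)}"

end

theory Submission
  imports Defs
begin

(* We prove (i) \<Leftrightarrow> (ii),
   (i) \<Rightarrow> (iii) and (iii) \<Rightarrow> (ii).
   - (i) \<Rightarrow> (ii): by heredity each D n contains a member C n of \<A>; a member of
     \<A> almost contained in every tail union of the C n is almost contained in
     every D n, because D decreases.
   - (ii) \<Rightarrow> (i): the tail unions of a sequence in \<A> decrease and lie in co(\<A>).
   - (i) \<Rightarrow> (iii): an infinite set almost contained in every tail union meets
     the sequence beyond every index.
   - (iii) \<Rightarrow> (ii) (the only place countability is used): enumerate X, pick
     B n \<in> \<A> inside D n avoiding the first n points, take A \<in> \<A> meeting
     infinitely many B n and choose one point of A \<inter> B n for each such n.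
     The enumeration makes the chosen points an infinite subset of A, and
     monotonicity of D makes it almost contained in every D m. *)

lemma hereditaryD:
  "hereditary \<A> \<Longrightarrow> A \<in> \<A> \<Longrightarrow> A' \<subseteq> A \<Longrightarrow> infinite A' \<Longrightarrow> A' \<in> \<A>"
  unfolding hereditary_def by blast

lemma co_contains_member:
  assumes "hereditary \<A>" and "D \<in> co X \<A>"
  shows "\<exists>C\<in>\<A>. C \<subseteq> D"
proof -
  from \<open>D \<in> co X \<A>\<close> obtain A where "A \<in> \<A>" and "infinite (D \<inter> A)"
    by (auto simp: co_def)
  with \<open>hereditary \<A>\<close> have "D \<inter> A \<in> \<A>" by (blast intro: hereditaryD)
  then show ?thesis by blast
qed

(* Removing finitely many points of a countable set keeps an infinite subset
   infinite: only finitely many points have enumeration index below n. *)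
lemma infinite_above_index:
  assumes "countable X" and "C \<subseteq> X" and "infinite C"
  shows "infinite {a \<in> C. n \<le> to_nat_on X a}"
proof
  let ?low = "{a \<in> C. to_nat_on X a < n}"
  assume "finite {a \<in> C. n \<le> to_nat_on X a}"
  moreover have "finite ?low"
  proof (rule finite_imageD)
    show "finite (to_nat_on X ` ?low)"
      by (rule finite_subset[of _ "{..<n}"]) auto
    show "inj_on (to_nat_on X) ?low"
    proof (rule inj_on_subset)
      show "inj_on (to_nat_on X) X" using assms(1) by (rule inj_on_to_nat_on)
    qed (use assms(2) in blast)
  qed
  moreover have "C = {a \<in> C. n \<le> to_nat_on X a} \<union> ?low" by auto
  ultimately show False using \<open>infinite C\<close> by (metis finite_UnI)
qed

lemma tail_in_co:
  fixes As :: "nat \<Rightarrow> 'a set"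
  assumes "\<A> \<subseteq> Pinf X" and "\<forall>i. As i \<in> \<A>"
  shows "(\<Union>i\<in>{n..}. As i) \<in> co X \<A>"
proof -
  let ?T = "\<Union>i\<in>{n..}. As i"
  have members: "As i \<subseteq> X \<and> infinite (As i)" for i
    using assms by (auto simp: Pinf_def)
  have "As n \<subseteq> ?T" by auto
  then have "infinite (?T \<inter> As n)"
    using members[of n] by (simp add: Int_absorb1)
  moreover have "?T \<in> Pinf X"
    using members \<open>As n \<subseteq> ?T\<close> finite_subset unfolding Pinf_def by blast
  ultimately show ?thesis
    using assms(2) unfolding co_def by blast
qed

lemma tail_decreasing:
  fixes As :: "nat \<Rightarrow> 'a set"
  shows "(\<Union>i\<in>{Suc n..}. As i) \<subseteq> (\<Union>i\<in>{n..}. As i)"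
  by (auto dest: Suc_leD)

lemma meets_infinitely_often:
  fixes As :: "nat \<Rightarrow> 'a set"
  assumes "infinite A" and "\<forall>n. finite (A - (\<Union>i\<in>{n..}. As i))"
  shows "infinite {n. A \<inter> As n \<noteq> {}}"
proof -
  have "\<exists>i\<ge>n. A \<inter> As i \<noteq> {}" for n
  proof (rule ccontr)
    assume "\<not> ?thesis"
    then have "A - (\<Union>i\<in>{n..}. As i) = A" by auto
    then show False using assms by metis
  qed
  then show ?thesis by (simp add: infinite_nat_iff_unbounded_le)
qed

(* Diagonal selection: if the point chosen at position n has weight h at
   least n, then choosing along an infinite index set yields infinitely many
   distinct points (finitely many points would have bounded weight). *)
lemma infinite_image_index_bounded:
  fixes h :: "'a \<Rightarrow> nat"
  assumes "infinite N" and "\<forall>n\<in>N. n \<le> h (g n)"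
  shows "infinite (g ` N)"
proof
  assume "finite (g ` N)"
  then obtain M where M: "\<forall>x\<in>g ` N. h x \<le> M"
    by (metis finite_imageI finite_nat_set_iff_bounded_le image_eqI)
  obtain n where "n \<in> N" and "n > M"
    using \<open>infinite N\<close> by (meson infinite_nat_iff_unbounded)
  then show False using M assms(2) by fastforce
qed

(* If g n \<in> D n for a decreasing D, then only the finitely many points g n
   with n < m can lie outside D m. *)
lemma diagonal_almost_contained:
  assumes dec: "\<forall>n. D (Suc n) \<subseteq> D n" and g: "\<forall>n\<in>N. g n \<in> D n"
  shows "finite (g ` N - D m)"
proof (rule finite_subset)
  show "g ` N - D m \<subseteq> g ` {..<m}"
  proof
    fix x assume "x \<in> g ` N - D m"
    then obtain n where "n \<in> N" "x = g n" "x \<notin> D m" by auto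
    moreover have "m \<le> n \<Longrightarrow> D n \<subseteq> D m"
      using dec by (metis lift_Suc_antimono_le)
    ultimately show "x \<in> g ` {..<m}" using g by fastforce
  qed
qed simp

lemma M_family_imp_co_property:
  fixes D :: "nat \<Rightarrow> 'a set"
  assumes M: "M_family \<A>"
    and co: "\<forall>n. D n \<in> co X \<A>" and dec: "\<forall>n. D (Suc n) \<subseteq> D n"
  shows "\<exists>A\<in>\<A>. \<forall>n. finite (A - D n)"
proof -
  have her: "hereditary \<A>" using M by (simp add: M_family_def)
  have "\<forall>n. \<exists>C\<in>\<A>. C \<subseteq> D n"
    using co_contains_member[OF her] co by blast
  then obtain C where C: "\<And>n. C n \<in> \<A> \<and> C n \<subseteq> D n" by metis
  then obtain A where "A \<in> \<A>" and A: "\<forall>n. finite (A - (\<Union>i\<in>{n..}. C i))"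
    using M unfolding M_family_def by blast
  have "C i \<subseteq> D n" if "n \<le> i" for n i
    using C[of i] lift_Suc_antimono_le[of D, OF _ that] dec by blast
  then have "(\<Union>i\<in>{n..}. C i) \<subseteq> D n" for n by auto
  then have "finite (A - D n)" for n
    using A by (meson Diff_mono finite_subset order_refl)
  with \<open>A \<in> \<A>\<close> show ?thesis by blast
qed

lemma co_property_imp_M_family:
  assumes "\<A> \<subseteq> Pinf X" and "hereditary \<A>"
    and H: "\<forall>D :: nat \<Rightarrow> 'a set. (\<forall>n. D n \<in> co X \<A>) \<and> (\<forall>n. D (Suc n) \<subseteq> D n) \<longrightarrow>
              (\<exists>A\<in>\<A>. \<forall>n. finite (A - D n))"
  shows "M_family \<A>"
proof -
  have "\<exists>A\<in>\<A>. \<forall>n. finite (A - (\<Union>i\<in>{n..}. As i))" if "\<forall>n. As n \<in> \<A>" for As :: "nat \<Rightarrow> 'a set"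
  proof (rule H[rule_format, of "\<lambda>n. \<Union>i\<in>{n..}. As i", OF conjI])
    show "\<forall>n. (\<Union>i\<in>{n..}. As i) \<in> co X \<A>"
      using tail_in_co[OF assms(1) that] by blast
    show "\<forall>n. (\<Union>i\<in>{Suc n..}. As i) \<subseteq> (\<Union>i\<in>{n..}. As i)"
      by (intro allI tail_decreasing)
  qed
  with \<open>hereditary \<A>\<close> show ?thesis unfolding M_family_def by blast
qed

lemma M_family_imp_meeting_property:
  fixes As :: "nat \<Rightarrow> 'a set"
  assumes "\<A> \<subseteq> Pinf X" and "M_family \<A>" and "\<forall>n. As n \<in> \<A>"
  shows "\<exists>A\<in>\<A>. infinite {n. A \<inter> As n \<noteq> {}}"
proof -
  obtain A where "A \<in> \<A>" and tails: "\<forall>n. finite (A - (\<Union>i\<in>{n..}. As i))"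
    using assms(2,3) unfolding M_family_def by blast
  have "infinite A" using \<open>A \<in> \<A>\<close> assms(1) by (auto simp: Pinf_def)
  then have "infinite {n. A \<inter> As n \<noteq> {}}" using tails by (rule meets_infinitely_often)
  with \<open>A \<in> \<A>\<close> show ?thesis by blast
qed

lemma meeting_property_imp_co_property:
  fixes D :: "nat \<Rightarrow> 'a set"
  assumes "countable X" and P: "\<A> \<subseteq> Pinf X" and her: "hereditary \<A>"
    and H: "\<forall>As :: nat \<Rightarrow> 'a set. (\<forall>n. As n \<in> \<A>) \<longrightarrow>
              (\<exists>A\<in>\<A>. infinite {n. A \<inter> As n \<noteq> {}})"
    and co: "\<forall>n. D n \<in> co X \<A>" and dec: "\<forall>n. D (Suc n) \<subseteq> D n"
  shows "\<exists>A\<in>\<A>. \<forall>n. finite (A - D n)"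
proof -
  let ?idx = "to_nat_on X"
  have "\<forall>n. \<exists>C\<in>\<A>. C \<subseteq> D n"
    using co_contains_member[OF her] co by blast
  then obtain C where C: "\<And>n. C n \<in> \<A> \<and> C n \<subseteq> D n" by metis
  define B where "B n = {a \<in> C n. n \<le> ?idx a}" for n
  have B: "B n \<in> \<A>" for n
  proof (rule hereditaryD[OF her])
    show "C n \<in> \<A>" and "B n \<subseteq> C n" using C by (auto simp: B_def)
    have "C n \<subseteq> X" "infinite (C n)" using C[of n] P by (auto simp: Pinf_def)
    then show "infinite (B n)" unfolding B_def by (rule infinite_above_index[OF \<open>countable X\<close>])
  qed
  have "\<exists>A\<in>\<A>. infinite {n. A \<inter> B n \<noteq> {}}"
    using H[rule_format, of B] B by blast
  then obtain A where "A \<in> \<A>" and hits: "infinite {n. A \<inter> B n \<noteq> {}}" by blast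
  define N where "N = {n. A \<inter> B n \<noteq> {}}"
  have "\<forall>n\<in>N. \<exists>a. a \<in> A \<inter> B n" unfolding N_def by blast
  then obtain g where g: "\<forall>n\<in>N. g n \<in> A \<inter> B n" by (metis bchoice)
  have "infinite (g ` N)"
  proof (rule infinite_image_index_bounded[where h = ?idx])
    show "infinite N" using hits unfolding N_def .
    show "\<forall>n\<in>N. n \<le> ?idx (g n)" using g unfolding B_def by blast
  qed
  moreover have "g ` N \<subseteq> A" using g by blast
  ultimately have "g ` N \<in> \<A>" using hereditaryD[OF her \<open>A \<in> \<A>\<close>] by blast
  moreover have "\<forall>n\<in>N. g n \<in> D n" using g C unfolding B_def by blast
  then have "\<forall>m. finite (g ` N - D m)" using diagonal_almost_contained[OF dec] by blast
  ultimately show ?thesis by blast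
qed

theorem fact3:
  fixes X :: "'a set" and \<A> :: "'a set set"
  assumes "countable X"
    and "\<A> \<subseteq> Pinf X"
    and "hereditary \<A>"
  shows "(M_family \<A> \<longleftrightarrow>
           (\<forall>D :: nat \<Rightarrow> 'a set. (\<forall>n. D n \<in> co X \<A>) \<and> (\<forall>n. D (Suc n) \<subseteq> D n) \<longrightarrow>
              (\<exists>A\<in>\<A>. \<forall>n. finite (A - D n))))
       \<and> (M_family \<A> \<longleftrightarrow>
           (\<forall>As :: nat \<Rightarrow> 'a set. (\<forall>n. As n \<in> \<A>) \<longrightarrow>
              (\<exists>A\<in>\<A>. infinite {n. A \<inter> As n \<noteq> {}})))"
    (is "(?M \<longleftrightarrow> ?co) \<and> (?M \<longleftrightarrow> ?meet)")
proof -
  have i_ii: "?M \<Longrightarrow> ?co" using M_family_imp_co_property by blast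
  have ii_i: "?co \<Longrightarrow> ?M" using co_property_imp_M_family[OF assms(2,3)] by blast
  have i_iii: "?M \<Longrightarrow> ?meet" using M_family_imp_meeting_property[OF assms(2)] by blast
  have iii_ii: "?meet \<Longrightarrow> ?co" using meeting_property_imp_co_property[OF assms] by blast
  show ?thesis using i_ii ii_i i_iii iii_ii by blast
qed

end
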